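(* Let $K$ be a field, let $n,d\ge 2$ be integers with $d\neq 3$, let $V(n,d)=\{\mathbf b\in\mathbb N^n:\sum_i b_i=d\}$, let $\mathbf a=(0,\dots,0,1,d-1)\in V(n,d)$ and $\Gamma=V(n,d)\setminus\{\mathbf a\}$. Then $K[\Gamma]$ is quadratic, i.e. the kernel $I(\Gamma)$ of the $K$-algebra surjection $S=K[x_\alpha:\alpha\in\Gamma]\to K[\Gamma]$, $x_\alpha\mapsto t^\alpha$, is generated by homogeneous polynomials of degree $2$.
   Context: $K[\Gamma]$ denotes the $K$-subalgebra of $K[t_1,\dots,t_n]$ generated by the monomials $t^\alpha=t_1^{\alpha_1}\cdots t_n^{\alpha_n}$, $\alpha\in\Gamma$; $S$ is a polynomial ring with one variable $x_\alpha$ of degree $1$ for each $\alpha\in\Gamma$. *)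

theory Defs
  imports Main "HOL-Library.Poly_Mapping"
begin

(* Exponent vectors in N^n are finitely supported maps nat =>0 nat with support in
  {0..<n} (coordinate i of the paper is index i-1 here).
  A monomial in the variables x_alpha is a map (nat =>0 nat) =>0 nat
  (alpha \<mapsto> exponent of x_alpha); a polynomial is a finitely supported map from monomials
  to coefficients. Polynomials in t_1..t_n are maps (nat =>0 nat) =>0 'k.*)

type_synonym expvec = "nat \<Rightarrow>\<^sub>0 nat"
type_synonym 'k spoly = "((nat \<Rightarrow>\<^sub>0 nat) \<Rightarrow>\<^sub>0 nat) \<Rightarrow>\<^sub>0 'k"
type_synonym 'k tpoly = "(nat \<Rightarrow>\<^sub>0 nat) \<Rightarrow>\<^sub>0 'k"

definition Vnd :: "nat \<Rightarrow> nat \<Rightarrow> expvec set" where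
  "Vnd n d = {b. Poly_Mapping.keys b \<subseteq> {..<n} \<and> (\<Sum>i<n. Poly_Mapping.lookup b i) = d}"

definition avec :: "nat \<Rightarrow> nat \<Rightarrow> expvec" where
  "avec n d = Poly_Mapping.single (n - 2) 1 + Poly_Mapping.single (n - 1) (d - 1)"

definition Sring :: "expvec set \<Rightarrow> 'k::field spoly set" where
  "Sring \<Gamma> = {f. \<forall>m\<in>Poly_Mapping.keys f. Poly_Mapping.keys m \<subseteq> \<Gamma>}"

(* The K-algebra map x_alpha \<mapsto> t^alpha, extended multiplicatively and linearly.*)
definition toric_map :: "'k::field spoly \<Rightarrow> 'k tpoly" where
  "toric_map f = (\<Sum>m\<in>Poly_Mapping.keys f. Poly_Mapping.single 0 (Poly_Mapping.lookup f m) *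
       (\<Prod>\<alpha>\<in>Poly_Mapping.keys m. (Poly_Mapping.single \<alpha> 1) ^ Poly_Mapping.lookup m \<alpha>))"

definition toric_ideal :: "expvec set \<Rightarrow> 'k::field spoly set" where
  "toric_ideal \<Gamma> = {f \<in> Sring \<Gamma>. toric_map f = 0}"

definition homogeneous_deg :: "nat \<Rightarrow> 'k::field spoly \<Rightarrow> bool" where
  "homogeneous_deg k f \<longleftrightarrow> (\<forall>m\<in>Poly_Mapping.keys f. (\<Sum>\<alpha>\<in>Poly_Mapping.keys m. Poly_Mapping.lookup m \<alpha>) = k)"

definition ideal_in :: "'k::field spoly set \<Rightarrow> 'k spoly set \<Rightarrow> 'k spoly set" where
  "ideal_in R G = {f. \<exists>F c. finite F \<and> F \<subseteq> G \<and> (\<forall>g\<in>F. c g \<in> R) \<and> f = (\<Sum>g\<in>F. c g * g)}"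

end

theory Submission
  imports Defs "HOL-Library.Multiset"
begin

text \<open>A monomial of \<open>S\<close> is a multiset of exponent vectors in \<open>\<Gamma>\<close>, and the toric ideal is spanned by
  the binomials \<open>x\<^sup>A - x\<^sup>B\<close> with \<open>\<Sum>A = \<Sum>B\<close>. It is generated by quadrics as soon as any two
  monomials with the same sum are joined by moves that replace two factors by two others with
  the same sum, since each move is a multiple of a quadratic binomial.

  For \<open>\<Gamma> = V(n, d) - {a}\<close> every monomial is joined to a normal form. Weigh coordinate \<open>n - 1\<close>
  heaviest, then \<open>1, \<dots>, n - 2\<close>, and \<open>n\<close> least. A factor of maximal potential can always be
  raised by some move unless it is the greedy factor of the total exponent \<open>s\<close>, which fills the
  coordinates in this order; when \<open>s\<close> lives on the last two coordinates with \<open>s\<^sub>n\<^sub>-\<^sub>1 = d + 1\<close>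
  the greedy factor cannot occur without \<open>a\<close>, and \<open>(d - 1) e\<^sub>n\<^sub>-\<^sub>1 + e\<^sub>n\<close> replaces it. The normal
  factor is determined by \<open>s\<close>, so it can be split off from both monomials, and induction on the
  degree concludes. The hypothesis \<open>d \<noteq> 3\<close> is needed in exactly one case of the raising argument,
  where two factors \<open>2 e\<^sub>n\<^sub>-\<^sub>1 + (d - 2) e\<^sub>n\<close> are traded for \<open>4 e\<^sub>n\<^sub>-\<^sub>1 + (d - 4) e\<^sub>n\<close> and \<open>d e\<^sub>n\<close>.\<close>

section \<open>Toric ideals generated by quadratic moves\<close>

definition mset_of_pm :: "('a \<Rightarrow>\<^sub>0 nat) \<Rightarrow> 'a multiset" where
  "mset_of_pm m = Abs_multiset (Poly_Mapping.lookup m)"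

definition pm_of_mset :: "'a multiset \<Rightarrow> ('a \<Rightarrow>\<^sub>0 nat)" where
  "pm_of_mset A = Abs_poly_mapping (count A)"

lemma count_mset_of_pm [simp]: "count (mset_of_pm m) x = Poly_Mapping.lookup m x"
proof -
  have "finite {x. 0 < Poly_Mapping.lookup m x}"
    using finite_keys[of m] by (simp add: in_keys_iff[symmetric] Collect_mem_eq)
  then show ?thesis
    by (simp add: mset_of_pm_def count_Abs_multiset)
qed

lemma lookup_pm_of_mset [simp]: "Poly_Mapping.lookup (pm_of_mset A) x = count A x"
  by (simp add: pm_of_mset_def)

lemma keys_pm_of_mset [simp]: "Poly_Mapping.keys (pm_of_mset A) = set_mset A"
  by (auto simp: in_keys_iff)

lemma set_mset_of_pm [simp]: "set_mset (mset_of_pm m) = Poly_Mapping.keys m"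
  by (auto simp: in_keys_iff simp flip: count_greater_zero_iff)

lemma mset_of_pm_of_mset [simp]: "mset_of_pm (pm_of_mset A) = A"
  by (rule multiset_eqI) simp

lemma pm_of_mset_of_pm [simp]: "pm_of_mset (mset_of_pm m) = m"
  by (rule poly_mapping_eqI) simp

lemma mset_of_pm_add: "mset_of_pm (m + m') = mset_of_pm m + mset_of_pm m'"
  by (rule multiset_eqI) (simp add: lookup_add)

lemma pm_of_mset_union: "pm_of_mset (A + B) = pm_of_mset A + pm_of_mset B"
  by (rule poly_mapping_eqI) (simp add: lookup_add)

lemma degree_pm_of_mset:
  "(\<Sum>x\<in>Poly_Mapping.keys (pm_of_mset A). Poly_Mapping.lookup (pm_of_mset A) x) = size A"
  by (simp add: size_multiset_overloaded_eq)

definition toric_exp :: "('a::comm_monoid_add \<Rightarrow>\<^sub>0 nat) \<Rightarrow> 'a" where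
  "toric_exp m = sum_mset (mset_of_pm m)"

lemma toric_exp_add: "toric_exp (m + m') = toric_exp m + toric_exp m'"
  by (simp add: toric_exp_def mset_of_pm_add)

lemma toric_exp_pm_of_mset [simp]: "toric_exp (pm_of_mset A) = sum_mset A"
  by (simp add: toric_exp_def)

lemma prod_single_power_count:
  assumes "finite S" "set_mset A \<subseteq> S"
  shows "(\<Prod>\<alpha>\<in>S. Poly_Mapping.single \<alpha> (1::'k::comm_semiring_1) ^ count A \<alpha>)
    = Poly_Mapping.single (sum_mset A) 1"
  using assms(2)
proof (induction A)
  case empty
  then show ?case by simp
next
  case (add x A)
  have "(\<Prod>\<alpha>\<in>S. Poly_Mapping.single \<alpha> (1::'k) ^ count (add_mset x A) \<alpha>)
      = (\<Prod>\<alpha>\<in>S. (if \<alpha> = x then Poly_Mapping.single \<alpha> 1 else 1) *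
           Poly_Mapping.single \<alpha> 1 ^ count A \<alpha>)"
    by (rule prod.cong) auto
  also have "\<dots> = Poly_Mapping.single x 1 * (\<Prod>\<alpha>\<in>S. Poly_Mapping.single \<alpha> 1 ^ count A \<alpha>)"
    using assms(1) add.prems by (simp add: prod.distrib prod.delta)
  finally show ?case
    using add by (simp add: mult_single)
qed

lemma toric_map_eq:
  "toric_map f = (\<Sum>m\<in>Poly_Mapping.keys f. Poly_Mapping.single (toric_exp m) (Poly_Mapping.lookup f m))"
  unfolding toric_map_def
proof (rule sum.cong[OF refl])
  fix m :: "expvec \<Rightarrow>\<^sub>0 nat"
  have "(\<Prod>\<alpha>\<in>Poly_Mapping.keys m. Poly_Mapping.single \<alpha> 1 ^ Poly_Mapping.lookup m \<alpha>)
      = Poly_Mapping.single (toric_exp m) (1::'a)"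
    using prod_single_power_count[of "Poly_Mapping.keys m" "mset_of_pm m"]
    by (simp add: toric_exp_def)
  then show "Poly_Mapping.single 0 (Poly_Mapping.lookup f m) *
      (\<Prod>\<alpha>\<in>Poly_Mapping.keys m. Poly_Mapping.single \<alpha> 1 ^ Poly_Mapping.lookup m \<alpha>)
    = Poly_Mapping.single (toric_exp m) (Poly_Mapping.lookup f m)"
    by (simp add: mult_single)
qed

lemma toric_map_eq_sum_over:
  assumes "finite S" "Poly_Mapping.keys f \<subseteq> S"
  shows "toric_map f = (\<Sum>m\<in>S. Poly_Mapping.single (toric_exp m) (Poly_Mapping.lookup f m))"
  unfolding toric_map_eq
  by (rule sum.mono_neutral_left) (use assms in \<open>auto simp: in_keys_iff\<close>)

lemma toric_map_single [simp]:
  "toric_map (Poly_Mapping.single m c) = Poly_Mapping.single (toric_exp m) c"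
  by (simp add: toric_map_eq)

lemma toric_map_zero [simp]: "toric_map 0 = 0"
  by (simp add: toric_map_def)

lemma toric_map_add: "toric_map (f + g) = toric_map f + toric_map g"
proof -
  let ?S = "Poly_Mapping.keys f \<union> Poly_Mapping.keys g"
  have "toric_map (f + g) = (\<Sum>m\<in>?S. Poly_Mapping.single (toric_exp m) (Poly_Mapping.lookup (f + g) m))"
    by (rule toric_map_eq_sum_over) (auto simp: keys_add)
  also have "\<dots> = toric_map f + toric_map g"
    by (simp add: lookup_add single_add sum.distrib toric_map_eq_sum_over[of ?S])
  finally show ?thesis .
qed

lemma toric_map_diff: "toric_map (f - g) = toric_map f - toric_map g"
  using toric_map_add[of "f - g" g] by (simp add: eq_diff_eq)

lemma toric_map_sum: "toric_map (sum h I) = (\<Sum>i\<in>I. toric_map (h i))"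
  by (induction I rule: infinite_finite_induct) (simp_all add: toric_map_add)

lemma poly_mapping_sum_single:
  "f = (\<Sum>m\<in>Poly_Mapping.keys f. Poly_Mapping.single m (Poly_Mapping.lookup f m))"
  by (rule poly_mapping_eqI) (auto simp: lookup_sum lookup_single when_def in_keys_iff)

lemma toric_map_mult: "toric_map (f * g) = toric_map f * toric_map g"
proof -
  let ?F = "Poly_Mapping.keys f" and ?G = "Poly_Mapping.keys g"
  have "f * g = (\<Sum>m\<in>?F. \<Sum>m'\<in>?G.
      Poly_Mapping.single (m + m') (Poly_Mapping.lookup f m * Poly_Mapping.lookup g m'))"
    by (subst poly_mapping_sum_single, subst (2) poly_mapping_sum_single)
      (simp add: sum_product mult_single)
  then have "toric_map (f * g) = (\<Sum>m\<in>?F. \<Sum>m'\<in>?G.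
      Poly_Mapping.single (toric_exp m + toric_exp m') (Poly_Mapping.lookup f m * Poly_Mapping.lookup g m'))"
    by (simp add: toric_map_sum toric_exp_add)
  then show ?thesis
    by (simp add: toric_map_eq[of f] toric_map_eq[of g] sum_product mult_single)
qed

lemma lookup_toric_map:
  "Poly_Mapping.lookup (toric_map f) e
    = (\<Sum>m\<in>Poly_Mapping.keys f. if toric_exp m = e then Poly_Mapping.lookup f m else 0)"
  by (simp add: toric_map_eq lookup_sum lookup_single when_def)

lemma Sring_add: "f \<in> Sring \<Gamma> \<Longrightarrow> g \<in> Sring \<Gamma> \<Longrightarrow> f + g \<in> Sring \<Gamma>"
  unfolding Sring_def mem_Collect_eq by (meson Un_iff keys_add subsetD)

lemma Sring_zero: "0 \<in> Sring \<Gamma>"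
  by (simp add: Sring_def)

lemma Sring_sum: "(\<And>i. i \<in> I \<Longrightarrow> h i \<in> Sring \<Gamma>) \<Longrightarrow> sum h I \<in> Sring \<Gamma>"
  by (induction I rule: infinite_finite_induct) (simp_all add: Sring_add Sring_zero)

lemma Sring_single: "Poly_Mapping.keys m \<subseteq> \<Gamma> \<Longrightarrow> Poly_Mapping.single m c \<in> Sring \<Gamma>"
  by (simp add: Sring_def)

lemma Sring_diff:
  assumes "f \<in> Sring \<Gamma>" "g \<in> Sring \<Gamma>"
  shows "f - g \<in> Sring \<Gamma>"
proof -
  have "- g \<in> Sring \<Gamma>"
    using assms(2) unfolding Sring_def by simp
  then show ?thesis
    unfolding diff_conv_add_uminus by (rule Sring_add[OF assms(1)])
qed

lemma Sring_mult:
  assumes "f \<in> Sring \<Gamma>" "g \<in> Sring \<Gamma>"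
  shows "f * g \<in> Sring \<Gamma>"
  unfolding Sring_def mem_Collect_eq
proof
  fix m
  assume "m \<in> Poly_Mapping.keys (f * g)"
  then have "m \<in> {a + b |a b. a \<in> Poly_Mapping.keys f \<and> b \<in> Poly_Mapping.keys g}"
    using keys_mult by (rule subsetD[rotated])
  then obtain a b where "m = a + b" "a \<in> Poly_Mapping.keys f" "b \<in> Poly_Mapping.keys g"
    by (auto simp only: mem_Collect_eq)
  moreover have "Poly_Mapping.keys a \<subseteq> \<Gamma>" "Poly_Mapping.keys b \<subseteq> \<Gamma>"
    using assms \<open>a \<in> _\<close> \<open>b \<in> _\<close> unfolding Sring_def by simp_all
  ultimately show "Poly_Mapping.keys m \<subseteq> \<Gamma>"
    by (meson keys_add le_sup_iff order_trans)
qed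

lemma ideal_inI:
  assumes "finite F" "F \<subseteq> G" "\<forall>g\<in>F. c g \<in> R" "f = (\<Sum>g\<in>F. c g * g)"
  shows "f \<in> ideal_in R G"
  unfolding ideal_in_def mem_Collect_eq by (intro exI conjI) (rule assms)+

lemma ideal_inE:
  assumes "f \<in> ideal_in R G"
  obtains F c where "finite F" "F \<subseteq> G" "\<forall>g\<in>F. c g \<in> R" "f = (\<Sum>g\<in>F. c g * g)"
  using assms unfolding ideal_in_def mem_Collect_eq by (elim exE conjE) (rule that; assumption)

lemma ideal_in_zero: "0 \<in> ideal_in R G"
  by (rule ideal_inI[of "{}"]) simp_all

lemma ideal_in_generator: "g \<in> G \<Longrightarrow> c \<in> R \<Longrightarrow> c * g \<in> ideal_in R G"
  by (rule ideal_inI[of "{g}" _ "\<lambda>_. c"]) simp_all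

lemma ideal_in_add:
  assumes "f \<in> ideal_in (Sring \<Gamma>) G" "f' \<in> ideal_in (Sring \<Gamma>) G"
  shows "f + f' \<in> ideal_in (Sring \<Gamma>) G"
proof -
  obtain F c where F: "finite F" "F \<subseteq> G" "\<forall>g\<in>F. c g \<in> Sring \<Gamma>" "f = (\<Sum>g\<in>F. c g * g)"
    using assms(1) by (rule ideal_inE)
  obtain F' c' where F': "finite F'" "F' \<subseteq> G" "\<forall>g\<in>F'. c' g \<in> Sring \<Gamma>" "f' = (\<Sum>g\<in>F'. c' g * g)"
    using assms(2) by (rule ideal_inE)
  define e where "e g = (if g \<in> F then c g else 0) + (if g \<in> F' then c' g else 0)" for g
  have "(\<Sum>g\<in>F \<union> F'. e g * g)
      = (\<Sum>g\<in>F \<union> F'. if g \<in> F then c g * g else 0) + (\<Sum>g\<in>F \<union> F'. if g \<in> F' then c' g * g else 0)"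
    unfolding sum.distrib[symmetric] by (rule sum.cong) (auto simp: e_def distrib_right)
  also have "\<dots> = f + f'"
    using F F' by (simp add: sum.If_cases Int_absorb1 Int_absorb2)
  finally have "f + f' = (\<Sum>g\<in>F \<union> F'. e g * g)" ..
  moreover have "\<forall>g\<in>F \<union> F'. e g \<in> Sring \<Gamma>"
    using F(3) F'(3) unfolding e_def by (intro ballI Sring_add) (simp_all add: Sring_zero)
  ultimately show ?thesis
    using F(1,2) F'(1,2) by (intro ideal_inI[where c = e]) auto
qed

lemma ideal_in_mult:
  assumes "f \<in> ideal_in (Sring \<Gamma>) G" "r \<in> Sring \<Gamma>"
  shows "r * f \<in> ideal_in (Sring \<Gamma>) G"
proof -
  obtain F c where F: "finite F" "F \<subseteq> G" "\<forall>g\<in>F. c g \<in> Sring \<Gamma>" "f = (\<Sum>g\<in>F. c g * g)"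
    using assms(1) by (rule ideal_inE)
  then have "r * f = (\<Sum>g\<in>F. (r * c g) * g)"
    by (simp add: sum_distrib_left mult.assoc)
  then show ?thesis
    using F(1-3) assms(2) by (intro ideal_inI[where c = "\<lambda>g. r * c g"]) (simp_all add: Sring_mult)
qed

lemma ideal_in_sum:
  "(\<And>i. i \<in> I \<Longrightarrow> h i \<in> ideal_in (Sring \<Gamma>) G) \<Longrightarrow> sum h I \<in> ideal_in (Sring \<Gamma>) G"
  by (induction I rule: infinite_finite_induct) (simp_all add: ideal_in_add ideal_in_zero)

lemma ideal_in_subset_toric_ideal:
  assumes "G \<subseteq> toric_ideal \<Gamma>"
  shows "ideal_in (Sring \<Gamma>) G \<subseteq> toric_ideal \<Gamma>"
proof
  fix f
  assume "f \<in> ideal_in (Sring \<Gamma>) G"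
  then obtain F c where F: "finite F" "F \<subseteq> G" "\<forall>g\<in>F. c g \<in> Sring \<Gamma>" "f = (\<Sum>g\<in>F. c g * g)"
    by (rule ideal_inE)
  have gens: "\<And>g. g \<in> F \<Longrightarrow> g \<in> Sring \<Gamma> \<and> toric_map g = 0"
    using F(2) assms by (auto simp: toric_ideal_def)
  have "f \<in> Sring \<Gamma>"
    unfolding F(4) using F(3) gens by (auto intro!: Sring_sum Sring_mult)
  moreover have "toric_map f = 0"
    unfolding F(4) using gens by (simp add: toric_map_sum toric_map_mult)
  ultimately show "f \<in> toric_ideal \<Gamma>"
    by (simp add: toric_ideal_def)
qed

lemma sum_single_fibre_representatives_eq_0:
  assumes "toric_map f = 0"
    and rep_eq: "\<And>m m'. m \<in> Poly_Mapping.keys f \<Longrightarrow> m' \<in> Poly_Mapping.keys f \<Longrightarrow>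
      rep m = rep m' \<longleftrightarrow> toric_exp m = toric_exp m'"
  shows "(\<Sum>m\<in>Poly_Mapping.keys f. Poly_Mapping.single (rep m) (Poly_Mapping.lookup f m)) = 0"
proof (rule poly_mapping_eqI)
  let ?K = "Poly_Mapping.keys f" and ?c = "Poly_Mapping.lookup f"
  fix m0
  show "Poly_Mapping.lookup (\<Sum>m\<in>?K. Poly_Mapping.single (rep m) (?c m)) m0 = Poly_Mapping.lookup 0 m0"
  proof (cases "\<exists>m'\<in>?K. rep m' = m0")
    case True
    then obtain m' where m': "m' \<in> ?K" "rep m' = m0"
      by blast
    have "Poly_Mapping.lookup (\<Sum>m\<in>?K. Poly_Mapping.single (rep m) (?c m)) m0
        = Poly_Mapping.lookup (toric_map f) (toric_exp m')"
      unfolding lookup_sum lookup_toric_map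
    proof (rule sum.cong)
      fix m
      assume "m \<in> ?K"
      then have "rep m = m0 \<longleftrightarrow> toric_exp m = toric_exp m'"
        using rep_eq[OF _ m'(1)] m'(2) by simp
      then show "Poly_Mapping.lookup (Poly_Mapping.single (rep m) (?c m)) m0
          = (if toric_exp m = toric_exp m' then ?c m else 0)"
        by (simp add: lookup_single when_def)
    qed simp
    with assms(1) show ?thesis
      by simp
  next
    case False
    then show ?thesis
      by (simp add: lookup_sum lookup_single when_def)
  qed
qed

text \<open>Subtracting from each monomial of \<open>f\<close> a representative of its fibre leaves a combination
  of binomials plus a polynomial whose coefficients are those of \<open>toric_map f\<close>.\<close>

lemma toric_ideal_subset_ideal_of_binomials:
  fixes G :: "'k::field spoly set"
  assumes binomials: "\<And>m m'. Poly_Mapping.keys m \<subseteq> \<Gamma> \<Longrightarrow> Poly_Mapping.keys m' \<subseteq> \<Gamma> \<Longrightarrow>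
      toric_exp m = toric_exp m' \<Longrightarrow>
      Poly_Mapping.single m 1 - Poly_Mapping.single m' 1 \<in> ideal_in (Sring \<Gamma>) G"
  shows "toric_ideal \<Gamma> \<subseteq> ideal_in (Sring \<Gamma>) G"
proof
  fix f :: "'k spoly"
  assume f: "f \<in> toric_ideal \<Gamma>"
  let ?K = "Poly_Mapping.keys f" and ?c = "Poly_Mapping.lookup f"
  define rep where "rep m = (SOME m'. m' \<in> ?K \<and> toric_exp m' = toric_exp m)" for m
  have rep: "rep m \<in> ?K \<and> toric_exp (rep m) = toric_exp m" if "m \<in> ?K" for m
    unfolding rep_def by (rule someI) (use that in blast)
  have rep_eq: "rep m = rep m' \<longleftrightarrow> toric_exp m = toric_exp m'" if "m \<in> ?K" "m' \<in> ?K" for m m'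
  proof
    assume "rep m = rep m'"
    then show "toric_exp m = toric_exp m'"
      using rep[OF that(1)] rep[OF that(2)] by simp
  qed (simp add: rep_def)
  have "f = (\<Sum>m\<in>?K. Poly_Mapping.single m (?c m))"
    by (rule poly_mapping_sum_single)
  also have "\<dots> = (\<Sum>m\<in>?K. Poly_Mapping.single 0 (?c m) *
      (Poly_Mapping.single m 1 - Poly_Mapping.single (rep m) 1) + Poly_Mapping.single (rep m) (?c m))"
    by (simp add: right_diff_distrib mult_single)
  also have "\<dots> = (\<Sum>m\<in>?K. Poly_Mapping.single 0 (?c m) *
      (Poly_Mapping.single m 1 - Poly_Mapping.single (rep m) 1))"
    using f rep_eq by (simp add: sum.distrib sum_single_fibre_representatives_eq_0 toric_ideal_def)
  also have "\<dots> \<in> ideal_in (Sring \<Gamma>) G"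
  proof (rule ideal_in_sum)
    fix m
    assume m: "m \<in> ?K"
    have "\<forall>m\<in>?K. Poly_Mapping.keys m \<subseteq> \<Gamma>"
      using f by (simp add: toric_ideal_def Sring_def)
    then have "Poly_Mapping.keys m \<subseteq> \<Gamma>" "Poly_Mapping.keys (rep m) \<subseteq> \<Gamma>"
      using m rep[OF m] by blast+
    then show "Poly_Mapping.single 0 (?c m) * (Poly_Mapping.single m 1 - Poly_Mapping.single (rep m) 1)
        \<in> ideal_in (Sring \<Gamma>) G"
      using rep[OF m] by (intro ideal_in_mult binomials Sring_single) simp_all
  qed
  finally show "f \<in> ideal_in (Sring \<Gamma>) G" .
qed

definition quad_move :: "expvec set \<Rightarrow> expvec multiset \<Rightarrow> expvec multiset \<Rightarrow> bool" where
  "quad_move \<Gamma> A B \<longleftrightarrow> (\<exists>C \<alpha> \<beta> \<gamma> \<delta>. A = C + {#\<alpha>, \<beta>#} \<and> B = C + {#\<gamma>, \<delta>#} \<and>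
      \<alpha> \<in> \<Gamma> \<and> \<beta> \<in> \<Gamma> \<and> \<gamma> \<in> \<Gamma> \<and> \<delta> \<in> \<Gamma> \<and> \<alpha> + \<beta> = \<gamma> + \<delta>)"

definition quad_binomials :: "expvec set \<Rightarrow> 'k::field spoly set" where
  "quad_binomials \<Gamma> =
    {Poly_Mapping.single (pm_of_mset {#\<alpha>, \<beta>#}) 1 - Poly_Mapping.single (pm_of_mset {#\<gamma>, \<delta>#}) 1
      | \<alpha> \<beta> \<gamma> \<delta>. \<alpha> \<in> \<Gamma> \<and> \<beta> \<in> \<Gamma> \<and> \<gamma> \<in> \<Gamma> \<and> \<delta> \<in> \<Gamma> \<and> \<alpha> + \<beta> = \<gamma> + \<delta>}"

lemma quad_moveI:
  assumes "\<alpha> \<in> \<Gamma>" "\<beta> \<in> \<Gamma>" "\<gamma> \<in> \<Gamma>" "\<delta> \<in> \<Gamma>" "\<alpha> + \<beta> = \<gamma> + \<delta>"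
  shows "quad_move \<Gamma> (C + {#\<alpha>, \<beta>#}) (C + {#\<gamma>, \<delta>#})"
  unfolding quad_move_def using assms by blast

lemma quad_moveE:
  assumes "quad_move \<Gamma> A B"
  obtains C \<alpha> \<beta> \<gamma> \<delta> where "A = C + {#\<alpha>, \<beta>#}" "B = C + {#\<gamma>, \<delta>#}"
    "\<alpha> \<in> \<Gamma>" "\<beta> \<in> \<Gamma>" "\<gamma> \<in> \<Gamma>" "\<delta> \<in> \<Gamma>" "\<alpha> + \<beta> = \<gamma> + \<delta>"
  using assms unfolding quad_move_def by blast

lemma quad_move_set_mset: "quad_move \<Gamma> A B \<Longrightarrow> set_mset A \<subseteq> \<Gamma> \<Longrightarrow> set_mset B \<subseteq> \<Gamma>"
  by (elim quad_moveE) simp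

lemma quad_move_sum_mset: "quad_move \<Gamma> A B \<Longrightarrow> sum_mset A = sum_mset B"
  by (elim quad_moveE) (simp add: add.assoc[symmetric])

lemma quad_move_sym: "quad_move \<Gamma> A B \<Longrightarrow> quad_move \<Gamma> B A"
  unfolding quad_move_def by (elim exE conjE) (intro exI conjI, assumption+, simp)

lemma quad_move_add_mset: "quad_move \<Gamma> A B \<Longrightarrow> quad_move \<Gamma> (D + A) (D + B)"
proof (elim quad_moveE)
  fix C \<alpha> \<beta> \<gamma> \<delta>
  assume "A = C + {#\<alpha>, \<beta>#}" "B = C + {#\<gamma>, \<delta>#}"
    "\<alpha> \<in> \<Gamma>" "\<beta> \<in> \<Gamma>" "\<gamma> \<in> \<Gamma>" "\<delta> \<in> \<Gamma>" "\<alpha> + \<beta> = \<gamma> + \<delta>"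
  then show "quad_move \<Gamma> (D + A) (D + B)"
    using quad_moveI[of \<alpha> \<Gamma> \<beta> \<gamma> \<delta> "D + C"] by (simp add: add.assoc)
qed

lemma rtranclp_quad_move_set_mset:
  "(quad_move \<Gamma>)\<^sup>*\<^sup>* A B \<Longrightarrow> set_mset A \<subseteq> \<Gamma> \<Longrightarrow> set_mset B \<subseteq> \<Gamma>"
  by (induction rule: rtranclp_induct) (auto dest: quad_move_set_mset)

lemma rtranclp_quad_move_sum_mset: "(quad_move \<Gamma>)\<^sup>*\<^sup>* A B \<Longrightarrow> sum_mset A = sum_mset B"
  by (induction rule: rtranclp_induct) (auto dest: quad_move_sum_mset)

lemma rtranclp_quad_move_sym: "(quad_move \<Gamma>)\<^sup>*\<^sup>* A B \<Longrightarrow> (quad_move \<Gamma>)\<^sup>*\<^sup>* B A"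
  by (induction rule: rtranclp_induct) (auto dest: quad_move_sym intro: converse_rtranclp_into_rtranclp)

lemma rtranclp_quad_move_add_mset:
  "(quad_move \<Gamma>)\<^sup>*\<^sup>* A B \<Longrightarrow> (quad_move \<Gamma>)\<^sup>*\<^sup>* (D + A) (D + B)"
  by (induction rule: rtranclp_induct) (auto dest: quad_move_add_mset[of _ _ _ D])

lemma quad_binomials_homogeneous:
  assumes "g \<in> quad_binomials \<Gamma>"
  shows "homogeneous_deg 2 g"
proof -
  obtain \<alpha> \<beta> \<gamma> \<delta> where
    g: "g = Poly_Mapping.single (pm_of_mset {#\<alpha>, \<beta>#}) 1 - Poly_Mapping.single (pm_of_mset {#\<gamma>, \<delta>#}) 1"
    using assms unfolding quad_binomials_def by blast
  have "Poly_Mapping.keys g \<subseteq> {pm_of_mset {#\<alpha>, \<beta>#}, pm_of_mset {#\<gamma>, \<delta>#}}"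
    unfolding g by (rule order_trans[OF keys_diff]) auto
  then have "m = pm_of_mset {#\<alpha>, \<beta>#} \<or> m = pm_of_mset {#\<gamma>, \<delta>#}" if "m \<in> Poly_Mapping.keys g" for m
    using that by blast
  then show ?thesis
    unfolding homogeneous_deg_def
    by (metis degree_pm_of_mset size_add_mset size_empty numeral_2_eq_2)
qed

lemma quad_binomials_subset_toric_ideal: "quad_binomials \<Gamma> \<subseteq> toric_ideal \<Gamma>"
  unfolding quad_binomials_def toric_ideal_def
  by (auto simp: toric_map_diff add.commute intro!: Sring_diff Sring_single)

lemma binomial_in_ideal_if_quad_connected:
  assumes "(quad_move \<Gamma>)\<^sup>*\<^sup>* A B" "set_mset A \<subseteq> \<Gamma>"
  shows "Poly_Mapping.single (pm_of_mset A) (1::'k::field) - Poly_Mapping.single (pm_of_mset B) 1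
    \<in> ideal_in (Sring \<Gamma>) (quad_binomials \<Gamma>)"
  using assms
proof (induction rule: rtranclp_induct)
  case base
  show ?case by (simp add: ideal_in_zero)
next
  case (step B B')
  obtain C \<alpha> \<beta> \<gamma> \<delta> where move: "B = C + {#\<alpha>, \<beta>#}" "B' = C + {#\<gamma>, \<delta>#}"
    "\<alpha> \<in> \<Gamma>" "\<beta> \<in> \<Gamma>" "\<gamma> \<in> \<Gamma>" "\<delta> \<in> \<Gamma>" "\<alpha> + \<beta> = \<gamma> + \<delta>"
    using step.hyps(2) by (rule quad_moveE)
  have "set_mset C \<subseteq> \<Gamma>"
    using rtranclp_quad_move_set_mset[OF step.hyps(1) step.prems] move(1) by simp
  moreover have "Poly_Mapping.single (pm_of_mset {#\<alpha>, \<beta>#}) (1::'k)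
      - Poly_Mapping.single (pm_of_mset {#\<gamma>, \<delta>#}) 1 \<in> quad_binomials \<Gamma>"
    unfolding quad_binomials_def using move(3-7) by blast
  ultimately have "Poly_Mapping.single (pm_of_mset C) 1 * (Poly_Mapping.single (pm_of_mset {#\<alpha>, \<beta>#}) (1::'k)
      - Poly_Mapping.single (pm_of_mset {#\<gamma>, \<delta>#}) 1) \<in> ideal_in (Sring \<Gamma>) (quad_binomials \<Gamma>)"
    by (intro ideal_in_generator Sring_single) simp_all
  then have "Poly_Mapping.single (pm_of_mset B) (1::'k) - Poly_Mapping.single (pm_of_mset B') 1
      \<in> ideal_in (Sring \<Gamma>) (quad_binomials \<Gamma>)"
    by (simp only: move(1,2) pm_of_mset_union right_diff_distrib mult_single mult_1)
  from ideal_in_add[OF step.IH[OF step.prems] this] show ?case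
    by simp
qed

theorem toric_ideal_quadratic_if_fibres_connected:
  assumes connected: "\<And>A B. set_mset A \<subseteq> \<Gamma> \<Longrightarrow> set_mset B \<subseteq> \<Gamma> \<Longrightarrow>
    sum_mset A = sum_mset B \<Longrightarrow> (quad_move \<Gamma>)\<^sup>*\<^sup>* A B"
  shows "toric_ideal \<Gamma> = ideal_in (Sring \<Gamma>) (quad_binomials \<Gamma> :: 'k::field spoly set)"
proof
  show "ideal_in (Sring \<Gamma>) (quad_binomials \<Gamma>) \<subseteq> (toric_ideal \<Gamma> :: 'k spoly set)"
    by (rule ideal_in_subset_toric_ideal[OF quad_binomials_subset_toric_ideal])
  show "toric_ideal \<Gamma> \<subseteq> ideal_in (Sring \<Gamma>) (quad_binomials \<Gamma> :: 'k spoly set)"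
  proof (rule toric_ideal_subset_ideal_of_binomials)
    fix m m' :: "expvec \<Rightarrow>\<^sub>0 nat"
    assume "Poly_Mapping.keys m \<subseteq> \<Gamma>" "Poly_Mapping.keys m' \<subseteq> \<Gamma>" "toric_exp m = toric_exp m'"
    then have "(quad_move \<Gamma>)\<^sup>*\<^sup>* (mset_of_pm m) (mset_of_pm m')"
      by (intro connected) (simp_all add: toric_exp_def)
    from binomial_in_ideal_if_quad_connected[OF this] \<open>Poly_Mapping.keys m \<subseteq> \<Gamma>\<close>
    show "Poly_Mapping.single m 1 - Poly_Mapping.single m' 1 \<in> ideal_in (Sring \<Gamma>) (quad_binomials \<Gamma>)"
      by simp
  qed
qed

section \<open>Connectedness of the fibres of \<open>V(n, d)\<close> minus \<open>a\<close>\<close>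

lemma lookup_sum_mset: "Poly_Mapping.lookup (sum_mset A) l = (\<Sum>\<beta>\<in>#A. Poly_Mapping.lookup \<beta> l)"
  by (induction A) (auto simp: lookup_add)

lemma lookup_sum_mset_remove:
  fixes A :: "('a \<Rightarrow>\<^sub>0 nat) multiset"
  assumes "\<alpha> \<in># A"
  shows "Poly_Mapping.lookup (sum_mset A) l
    = Poly_Mapping.lookup \<alpha> l + Poly_Mapping.lookup (sum_mset (A - {#\<alpha>#})) l"
  using assms by (subst sum_mset.remove[of \<alpha> A]) (simp_all add: lookup_add)

lemma lookup_le_lookup_sum_mset:
  fixes A :: "('a \<Rightarrow>\<^sub>0 nat) multiset"
  shows "\<alpha> \<in># A \<Longrightarrow> Poly_Mapping.lookup \<alpha> l \<le> Poly_Mapping.lookup (sum_mset A) l"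
  using lookup_sum_mset_remove[of \<alpha> A l] by simp

lemma sum_mset_pos_imp_ex: "0 < (\<Sum>x\<in>#M. (f x :: nat)) \<Longrightarrow> \<exists>x\<in>#M. 0 < f x"
  by (induction M) auto

lemma exists_lookup_pos_if_lookup_less_sum_mset:
  fixes A :: "('a \<Rightarrow>\<^sub>0 nat) multiset"
  assumes "\<alpha> \<in># A" "Poly_Mapping.lookup \<alpha> l < Poly_Mapping.lookup (sum_mset A) l"
  shows "\<exists>\<beta>\<in>#A - {#\<alpha>#}. 0 < Poly_Mapping.lookup \<beta> l"
proof -
  have "0 < (\<Sum>\<beta>\<in>#A - {#\<alpha>#}. Poly_Mapping.lookup \<beta> l)"
    using assms lookup_sum_mset_remove[OF assms(1), of l] by (simp add: lookup_sum_mset)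
  then show ?thesis
    by (rule sum_mset_pos_imp_ex)
qed

lemma mset_eq_remove2_add:
  "\<alpha> \<in># A \<Longrightarrow> \<beta> \<in># A - {#\<alpha>#} \<Longrightarrow> A = (A - {#\<alpha>#} - {#\<beta>#}) + {#\<alpha>, \<beta>#}"
  by (metis add_mset_add_single add_mset_commute insert_DiffM union_mset_add_mset_right)

definition shift :: "('a \<Rightarrow>\<^sub>0 nat) \<Rightarrow> 'a \<Rightarrow> 'a \<Rightarrow> nat \<Rightarrow> ('a \<Rightarrow>\<^sub>0 nat)" where
  "shift x i j k = x + Poly_Mapping.single i k - Poly_Mapping.single j k"

lemma lookup_shift:
  "Poly_Mapping.lookup (shift x i j k) l
    = Poly_Mapping.lookup x l + (if l = i then k else 0) - (if l = j then k else 0)"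
  by (auto simp: shift_def lookup_minus lookup_add lookup_single when_def)

lemma shift_add_single:
  "k \<le> Poly_Mapping.lookup x j \<Longrightarrow> shift x i j k + Poly_Mapping.single j k = x + Poly_Mapping.single i k"
  by (rule poly_mapping_eqI) (auto simp: lookup_shift lookup_add lookup_single when_def)

lemma shift_shift_inverse: "k \<le> Poly_Mapping.lookup x j \<Longrightarrow> shift (shift x i j k) j i k = x"
  by (rule poly_mapping_eqI) (auto simp: lookup_shift)

lemma add_eq_shift_add_shift:
  "k \<le> Poly_Mapping.lookup x j \<Longrightarrow> k \<le> Poly_Mapping.lookup y i \<Longrightarrow> x + y = shift x i j k + shift y j i k"
  by (rule poly_mapping_eqI) (auto simp: lookup_shift lookup_add)

text \<open>Coordinates are numbered from \<open>0\<close>, so \<open>p = n - 2\<close> and \<open>q = n - 1\<close> are the paper's last two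
  coordinates \<open>n - 1\<close> and \<open>n\<close>.\<close>

locale simplex_minus_point =
  fixes n d :: nat
  assumes n_ge_2: "2 \<le> n" and d_ge_2: "2 \<le> d" and d_neq_3: "d \<noteq> 3"
begin

abbreviation "p \<equiv> n - 2"
abbreviation "q \<equiv> n - 1"
abbreviation "\<Gamma> \<equiv> Vnd n d - {avec n d}"

definition total :: "expvec \<Rightarrow> nat" where
  "total x = (\<Sum>l<n. Poly_Mapping.lookup x l)"

definition weight :: "nat \<Rightarrow> nat" where
  "weight l = (if l = p then n * d + 1 else n - l)"

definition potential :: "expvec \<Rightarrow> nat" where
  "potential x = (\<Sum>l<n. Poly_Mapping.lookup x l * weight l)"

definition rank :: "nat \<Rightarrow> nat" where
  "rank l = (if l = p then 0 else Suc l)"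

definition edge_point :: "nat \<Rightarrow> expvec" where
  "edge_point k = Poly_Mapping.single p k + Poly_Mapping.single q (d - k)"

definition on_edge :: "expvec \<Rightarrow> bool" where
  "on_edge x \<longleftrightarrow> (\<forall>h<p. Poly_Mapping.lookup x h = 0)"

lemma p_q: "p < n" "q < n" "p \<noteq> q"
  using n_ge_2 by auto

lemma coordinate_cases:
  obtains "l < p" | "l = p" | "l = q" | "n \<le> l"
proof -
  have "l < p \<or> l = p \<or> l = q \<or> n \<le> l"
    using n_ge_2 by linarith
  then show ?thesis
    using that by blast
qed

lemma n_le_n_mult_d: "n \<le> n * d"
  using d_ge_2 by simp

lemma weight_le: "weight l \<le> n * d + 1"
proof -
  have "n - l \<le> n * d + 1"
    using n_le_n_mult_d by linarith
  then show ?thesis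
    by (simp add: weight_def)
qed

lemma in_Vnd_iff:
  "x \<in> Vnd n d \<longleftrightarrow> (\<forall>l. n \<le> l \<longrightarrow> Poly_Mapping.lookup x l = 0) \<and> total x = d"
proof -
  have "Poly_Mapping.keys x \<subseteq> {..<n} \<longleftrightarrow> (\<forall>l. n \<le> l \<longrightarrow> Poly_Mapping.lookup x l = 0)"
    by (metis in_keys_iff lessThan_iff subset_eq not_le)
  then show ?thesis
    by (simp add: Vnd_def total_def)
qed

lemma total_add: "total (x + y) = total x + total y"
  by (simp add: total_def lookup_add sum.distrib)

lemma potential_add: "potential (x + y) = potential x + potential y"
  by (simp add: potential_def lookup_add sum.distrib algebra_simps)

lemma total_single: "l < n \<Longrightarrow> total (Poly_Mapping.single l k) = k"
  by (simp add: total_def lookup_single when_def)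

lemma potential_single: "l < n \<Longrightarrow> potential (Poly_Mapping.single l k) = k * weight l"
proof -
  assume "l < n"
  have "potential (Poly_Mapping.single l k) = (\<Sum>m<n. if l = m then k * weight l else 0)"
    unfolding potential_def by (rule sum.cong) (auto simp: lookup_single when_def)
  with \<open>l < n\<close> show ?thesis
    by simp
qed

lemma lookup_avec:
  "Poly_Mapping.lookup (avec n d) l = (if l = p then 1 else if l = q then d - 1 else 0)"
  using n_ge_2 by (simp add: avec_def lookup_add lookup_single when_def)

lemma neq_avecI: "Poly_Mapping.lookup x l \<noteq> Poly_Mapping.lookup (avec n d) l \<Longrightarrow> x \<noteq> avec n d"
  by auto

lemma lookup_le_total: "l < n \<Longrightarrow> Poly_Mapping.lookup x l \<le> total x"
  unfolding total_def by (rule member_le_sum) auto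

lemma lookup_le_degree: "x \<in> Vnd n d \<Longrightarrow> Poly_Mapping.lookup x l \<le> d"
  using lookup_le_total[of l x] by (cases "l < n") (auto simp: in_Vnd_iff)

lemma shift_in_Vnd:
  assumes "x \<in> Vnd n d" "i < n" "j < n" "k \<le> Poly_Mapping.lookup x j"
  shows "shift x i j k \<in> Vnd n d"
proof -
  have "total (shift x i j k) + k = total x + k"
    using arg_cong[OF shift_add_single[OF assms(4), of i], of total] assms(2,3)
    by (simp add: total_add total_single)
  with assms show ?thesis
    by (auto simp: in_Vnd_iff lookup_shift)
qed

lemma weight_less_if_rank_less:
  assumes "j < n" "rank i < rank j"
  shows "weight j < weight i"
proof (cases "i = p")
  case True
  then have "weight j \<le> n" "n * d < weight i"
    using assms(2) by (auto simp: rank_def weight_def)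
  with n_le_n_mult_d show ?thesis
    by linarith
next
  case False
  then show ?thesis
    using assms by (auto simp: rank_def weight_def split: if_splits)
qed

lemma rank_inj: "rank l = rank l' \<Longrightarrow> l = l'"
  by (auto simp: rank_def split: if_splits)

lemma potential_less_shift:
  assumes "i < n" "j < n" "k \<le> Poly_Mapping.lookup x j" "0 < k" "weight j < weight i"
  shows "potential x < potential (shift x i j k)"
proof -
  have "potential (shift x i j k) + k * weight j = potential x + k * weight i"
    using arg_cong[OF shift_add_single[OF assms(3), of i], of potential] assms(1,2)
    by (simp add: potential_add potential_single)
  moreover have "k * weight j < k * weight i"
    using assms(4,5) by simp
  ultimately show ?thesis
    by linarith
qed

lemma potential_le: "x \<in> Vnd n d \<Longrightarrow> potential x \<le> (n * d + 1) * d"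
proof -
  assume x: "x \<in> Vnd n d"
  have "potential x \<le> (\<Sum>l<n. Poly_Mapping.lookup x l * (n * d + 1))"
    unfolding potential_def by (intro sum_mono mult_le_mono2 weight_le)
  also have "\<dots> = total x * (n * d + 1)"
    unfolding total_def by (rule sum_distrib_right[symmetric])
  finally show ?thesis
    using x by (simp add: in_Vnd_iff mult.commute)
qed

lemma lookup_p_pos_if_potential_ge:
  assumes "x \<in> Vnd n d" "potential y \<le> potential x" "0 < Poly_Mapping.lookup y p"
  shows "0 < Poly_Mapping.lookup x p"
proof (rule ccontr)
  assume "\<not> 0 < Poly_Mapping.lookup x p"
  then have "potential x \<le> (\<Sum>l<n. Poly_Mapping.lookup x l * n)"
    unfolding potential_def by (intro sum_mono) (auto simp: weight_def)
  also have "\<dots> = n * d"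
    using assms(1) by (simp add: in_Vnd_iff total_def flip: sum_distrib_right)
  also have "\<dots> < 1 * weight p"
    by (simp add: weight_def)
  also have "\<dots> \<le> Poly_Mapping.lookup y p * weight p"
    using assms(3) by (intro mult_le_mono1) simp
  also have "\<dots> \<le> potential y"
    unfolding potential_def using p_q by (intro member_le_sum) auto
  finally show False
    using assms(2) by simp
qed

lemma lookup_edge_point:
  "Poly_Mapping.lookup (edge_point k) l = (if l = p then k else if l = q then d - k else 0)"
  using p_q by (simp add: edge_point_def lookup_add lookup_single when_def)

lemma avec_eq_edge_point: "avec n d = edge_point 1"
  by (simp add: avec_def edge_point_def)

lemma edge_point_lookup_p:
  assumes "x \<in> Vnd n d" "on_edge x"
  shows "x = edge_point (Poly_Mapping.lookup x p)"
proof -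
  have "total x = (\<Sum>l\<in>{p, q}. Poly_Mapping.lookup x l)"
    unfolding total_def
  proof (rule sum.mono_neutral_right)
    show "\<forall>l\<in>{..<n} - {p, q}. Poly_Mapping.lookup x l = 0"
    proof
      fix l
      assume "l \<in> {..<n} - {p, q}"
      then have "l < p"
        using n_ge_2 by auto
      with assms(2) show "Poly_Mapping.lookup x l = 0"
        by (simp add: on_edge_def)
    qed
  qed (use p_q in auto)
  then have "Poly_Mapping.lookup x p + Poly_Mapping.lookup x q = d"
    using assms(1) p_q by (simp add: in_Vnd_iff)
  show ?thesis
  proof (rule poly_mapping_eqI)
    fix l
    show "Poly_Mapping.lookup x l = Poly_Mapping.lookup (edge_point (Poly_Mapping.lookup x p)) l"
      using assms \<open>_ = d\<close> p_q
      by (cases rule: coordinate_cases[of l]) (auto simp: lookup_edge_point on_edge_def in_Vnd_iff)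
  qed
qed

lemma edge_point_inject: "edge_point k = edge_point k' \<Longrightarrow> k = k'"
  by (metis lookup_edge_point)

lemma edge_point_in_Vnd: "k \<le> d \<Longrightarrow> edge_point k \<in> Vnd n d"
proof -
  assume "k \<le> d"
  then have "total (edge_point k) = d"
    using p_q by (simp add: edge_point_def total_add total_single)
  then show ?thesis
    using n_ge_2 by (auto simp: in_Vnd_iff lookup_edge_point)
qed

lemma edge_point_in_Gamma: "k \<le> d \<Longrightarrow> k \<noteq> 1 \<Longrightarrow> edge_point k \<in> \<Gamma>"
  using edge_point_in_Vnd edge_point_inject by (auto simp: avec_eq_edge_point)

lemma lookup_p_neq_1_if_on_edge: "x \<in> \<Gamma> \<Longrightarrow> on_edge x \<Longrightarrow> Poly_Mapping.lookup x p \<noteq> 1"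
  using edge_point_lookup_p avec_eq_edge_point by force

lemma edge_point_add:
  assumes "k + k' = l + l'" "k \<le> d" "k' \<le> d" "l \<le> d" "l' \<le> d"
  shows "edge_point k + edge_point k' = edge_point l + edge_point l'"
  using assms p_q by (intro poly_mapping_eqI) (simp add: lookup_add lookup_edge_point)

lemma shift_edge_point: "k' \<le> d - k \<Longrightarrow> shift (edge_point k) p q k' = edge_point (k + k')"
  using p_q by (intro poly_mapping_eqI) (auto simp: lookup_shift lookup_edge_point)

lemma potential_edge_point_less: "k < l \<Longrightarrow> l \<le> d \<Longrightarrow> potential (edge_point k) < potential (edge_point l)"
proof -
  assume "k < l" "l \<le> d"
  then have "edge_point l = shift (edge_point k) p q (l - k)"
    using shift_edge_point[of "l - k" k] by simp
  also have "potential (edge_point k) < potential \<dots>"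
    using \<open>k < l\<close> \<open>l \<le> d\<close> p_q
    by (intro potential_less_shift weight_less_if_rank_less) (auto simp: lookup_edge_point rank_def)
  finally show ?thesis .
qed

lemma on_edge_if_on_edge_sum_mset:
  "on_edge (sum_mset A) \<Longrightarrow> \<beta> \<in># A \<Longrightarrow> on_edge \<beta>"
  unfolding on_edge_def using lookup_le_lookup_sum_mset by (metis le_zero_eq)

definition greedy :: "expvec \<Rightarrow> expvec \<Rightarrow> bool" where
  "greedy s \<alpha> \<longleftrightarrow> (\<forall>i<n. \<forall>j<n. rank i < rank j \<longrightarrow> 0 < Poly_Mapping.lookup \<alpha> j \<longrightarrow>
      Poly_Mapping.lookup \<alpha> i = Poly_Mapping.lookup s i)"

text \<open>For an exceptional sum every factor lies on the edge, and the greedy factor \<open>d e\<^sub>p\<close> would force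
  \<open>a\<close> among the remaining factors; the normal factor is then \<open>(d - 1) e\<^sub>p + e\<^sub>q\<close> instead.\<close>

definition exceptional :: "expvec \<Rightarrow> bool" where
  "exceptional s \<longleftrightarrow> on_edge s \<and> Poly_Mapping.lookup s p = d + 1"

definition normal_factor :: "expvec \<Rightarrow> expvec \<Rightarrow> bool" where
  "normal_factor s \<alpha> \<longleftrightarrow> (if exceptional s then \<alpha> = edge_point (d - 1) else greedy s \<alpha>)"

definition raisable :: "expvec multiset \<Rightarrow> expvec \<Rightarrow> bool" where
  "raisable A \<alpha> \<longleftrightarrow> (\<exists>A'. (quad_move \<Gamma>)\<^sup>*\<^sup>* A A' \<and> (\<exists>\<gamma>\<in>#A'. potential \<alpha> < potential \<gamma>))"

lemma raisable_if_rtranclp: "(quad_move \<Gamma>)\<^sup>*\<^sup>* A B \<Longrightarrow> raisable B \<alpha> \<Longrightarrow> raisable A \<alpha>"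
  unfolding raisable_def by (meson rtranclp_trans)

lemma raisable_by_move:
  assumes "quad_move \<Gamma> A (C + {#\<gamma>, \<delta>#})" "potential \<alpha> < potential \<gamma>"
  shows "raisable A \<alpha>"
  unfolding raisable_def using assms by (intro exI[of _ "C + {#\<gamma>, \<delta>#}"]) auto

lemma raisable_by_shift:
  assumes "A = C + {#\<alpha>, \<beta>#}" "\<alpha> \<in> \<Gamma>" "\<beta> \<in> \<Gamma>" "i < n" "j < n" "rank i < rank j" "0 < k"
    "k \<le> Poly_Mapping.lookup \<alpha> j" "k \<le> Poly_Mapping.lookup \<beta> i"
    "shift \<alpha> i j k \<noteq> avec n d" "shift \<beta> j i k \<noteq> avec n d"
  shows "raisable A \<alpha>"
proof (rule raisable_by_move)
  show "quad_move \<Gamma> A (C + {#shift \<alpha> i j k, shift \<beta> j i k#})"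
    unfolding assms(1) using assms(2-5,8-11)
    by (intro quad_moveI add_eq_shift_add_shift) (simp_all add: shift_in_Vnd)
  show "potential \<alpha> < potential (shift \<alpha> i j k)"
    using assms(2,4-8) by (intro potential_less_shift weight_less_if_rank_less)
qed

lemma raisable_by_edge_move:
  assumes "A = C + {#edge_point k, edge_point k'#}" "k + k' = l + l'" "k < l"
    "k \<le> d" "k' \<le> d" "l \<le> d" "l' \<le> d" "k \<noteq> 1" "k' \<noteq> 1" "l \<noteq> 1" "l' \<noteq> 1"
  shows "raisable A (edge_point k)"
proof (rule raisable_by_move)
  show "quad_move \<Gamma> A (C + {#edge_point l, edge_point l'#})"
    unfolding assms(1) using assms(2,4-) by (intro quad_moveI edge_point_add edge_point_in_Gamma)
  show "potential (edge_point k) < potential (edge_point l)"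
    using assms(3,6) by (rule potential_edge_point_less)
qed

end

locale max_factor = simplex_minus_point +
  fixes A :: "expvec multiset" and \<alpha> :: expvec
  assumes factors_in_Gamma: "set_mset A \<subseteq> \<Gamma>"
    and factor: "\<alpha> \<in># A"
    and potential_max: "\<forall>\<beta>\<in>#A. potential \<beta> \<le> potential \<alpha>"
begin

lemma factor_in_Gamma: "\<alpha> \<in> \<Gamma>"
  using factors_in_Gamma factor by blast

lemma partner_in_Gamma: "\<beta> \<in># A - {#\<alpha>#} \<Longrightarrow> \<beta> \<in> \<Gamma>"
  using factors_in_Gamma by (blast dest: in_diffD)

lemma lookup_p_pos_if_partner: "\<beta> \<in># A - {#\<alpha>#} \<Longrightarrow> 0 < Poly_Mapping.lookup \<beta> p \<Longrightarrow> 0 < Poly_Mapping.lookup \<alpha> p"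
  using factor_in_Gamma potential_max by (blast dest: in_diffD intro: lookup_p_pos_if_potential_ge)

lemma raisable_by_shift_with:
  assumes "\<beta> \<in># A - {#\<alpha>#}" "i < n" "j < n" "rank i < rank j" "0 < k"
    "k \<le> Poly_Mapping.lookup \<alpha> j" "k \<le> Poly_Mapping.lookup \<beta> i"
    "shift \<alpha> i j k \<noteq> avec n d" "shift \<beta> j i k \<noteq> avec n d"
  shows "raisable A \<alpha>"
  using mset_eq_remove2_add[OF factor assms(1)] factor_in_Gamma partner_in_Gamma[OF assms(1)] assms(2-)
  by (rule raisable_by_shift)

lemma raisable_by_edge_move_with:
  assumes "\<alpha> = edge_point k" "edge_point k' \<in># A - {#\<alpha>#}" "k + k' = l + l'" "k < l"
    "l \<le> d" "l' \<le> d" "l \<noteq> 1" "l' \<noteq> 1"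
  shows "raisable A \<alpha>"
proof -
  have "edge_point k \<in> \<Gamma>" "edge_point k' \<in> \<Gamma>"
    using factor_in_Gamma partner_in_Gamma[OF assms(2)] assms(1) by simp_all
  then have "k \<le> d" "k' \<le> d" "k \<noteq> 1" "k' \<noteq> 1"
    using lookup_le_degree[of "edge_point k" p] lookup_le_degree[of "edge_point k'" p]
    by (auto simp: lookup_edge_point avec_eq_edge_point)
  obtain C where "A = C + {#\<alpha>, edge_point k'#}"
    using mset_eq_remove2_add[OF factor assms(2)] by blast
  then have "A = C + {#edge_point k, edge_point k'#}"
    using assms(1) by simp
  from raisable_by_edge_move[OF this assms(3,4) \<open>k \<le> d\<close> \<open>k' \<le> d\<close> assms(5,6) \<open>k \<noteq> 1\<close> \<open>k' \<noteq> 1\<close> assms(7,8)]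
  show ?thesis
    using assms(1) by simp
qed

lemma raisable_if_exceptional:
  assumes "exceptional (sum_mset A)" "\<alpha> \<noteq> edge_point (d - 1)"
  shows "raisable A \<alpha>"
proof -
  define x where "x = Poly_Mapping.lookup \<alpha> p"
  have on_edge: "on_edge \<beta>" if "\<beta> \<in># A" for \<beta>
    using assms(1) that by (auto simp: exceptional_def intro: on_edge_if_on_edge_sum_mset)
  have "\<alpha> \<in> Vnd n d"
    using factor_in_Gamma by simp
  then have \<alpha>: "\<alpha> = edge_point x" "x \<le> d"
    using edge_point_lookup_p[OF _ on_edge[OF factor]] lookup_le_degree by (simp_all add: x_def)
  have "x < Poly_Mapping.lookup (sum_mset A) p"
    using \<alpha>(2) assms(1) by (simp add: exceptional_def)
  then obtain \<beta> where \<beta>: "\<beta> \<in># A - {#\<alpha>#}" "0 < Poly_Mapping.lookup \<beta> p"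
    using exists_lookup_pos_if_lookup_less_sum_mset[OF factor] x_def by blast
  define y where "y = Poly_Mapping.lookup \<beta> p"
  have "on_edge \<beta>" "\<beta> \<in> \<Gamma>"
    using on_edge partner_in_Gamma \<beta>(1) by (auto dest: in_diffD)
  then have \<beta>_eq: "\<beta> = edge_point y" and "y \<noteq> 1" "y \<le> d"
    using edge_point_lookup_p[of \<beta>] lookup_p_neq_1_if_on_edge[of \<beta>] lookup_le_degree[of \<beta> p]
    by (simp_all add: y_def)
  have "x + y \<le> d + 1"
    using lookup_sum_mset_remove[OF factor, of p] lookup_le_lookup_sum_mset[OF \<beta>(1), of p] assms(1)
    by (simp add: exceptional_def x_def y_def)
  moreover have "x \<noteq> d - 1"
    using assms(2) \<alpha>(1) by auto
  moreover have "0 < y"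
    using \<beta>(2) y_def by simp
  moreover have "edge_point y \<in># A - {#\<alpha>#}"
    using \<beta>(1) \<beta>_eq by simp
  ultimately show ?thesis
  proof (cases "x + y \<le> d")
    case True
    with \<alpha> \<open>0 < y\<close> \<open>y \<noteq> 1\<close> \<open>edge_point y \<in># _\<close> show ?thesis
      by (intro raisable_by_edge_move_with[of x y "x + y" 0]) auto
  next
    case False
    with \<alpha> \<open>y \<noteq> 1\<close> \<open>y \<le> d\<close> \<open>x + y \<le> d + 1\<close> \<open>x \<noteq> d - 1\<close> \<open>edge_point y \<in># _\<close> show ?thesis
      by (intro raisable_by_edge_move_with[of x y "d - 1" 2]) auto
  qed
qed

lemma raisable_if_partner_lookup_p_eq_1:
  assumes "\<beta> \<in># A - {#\<alpha>#}" "Poly_Mapping.lookup \<beta> p = 1" "h < p" "0 < Poly_Mapping.lookup \<beta> h"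
    "0 < Poly_Mapping.lookup \<alpha> q"
  shows "raisable A \<alpha>"
proof (rule raisable_by_shift_with[OF assms(1), of p q 1])
  have "0 < Poly_Mapping.lookup \<alpha> p"
    using lookup_p_pos_if_partner[OF assms(1)] assms(2) by simp
  then show "shift \<alpha> p q 1 \<noteq> avec n d"
    using p_q by (intro neq_avecI[of _ p]) (simp add: lookup_shift lookup_avec)
  show "shift \<beta> q p 1 \<noteq> avec n d"
    using assms(3,4) by (intro neq_avecI[of _ h]) (simp add: lookup_shift lookup_avec)
qed (use assms p_q in \<open>auto simp: rank_def\<close>)

lemma raisable_if_top_and_partner_lookup_p_pos:
  assumes "\<alpha> = edge_point (d - 1)" "\<beta> \<in># A - {#\<alpha>#}" "0 < Poly_Mapping.lookup \<beta> p"
    "\<beta> \<noteq> edge_point 2"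
  shows "raisable A \<alpha>"
proof (rule raisable_by_shift_with[OF assms(2), of p q 1])
  show "shift \<alpha> p q 1 \<noteq> avec n d"
    using assms(1) d_ge_2 p_q by (intro neq_avecI[of _ p]) (simp add: lookup_shift lookup_edge_point lookup_avec)
  show "shift \<beta> q p 1 \<noteq> avec n d"
  proof
    assume "shift \<beta> q p 1 = avec n d"
    then have "\<beta> = shift (edge_point 1) p q 1"
      using shift_shift_inverse[of 1 \<beta> p q] assms(3) by (simp add: avec_eq_edge_point)
    also have "\<dots> = edge_point (1 + 1)"
      using d_ge_2 by (intro shift_edge_point) simp
    finally have "\<beta> = edge_point 2"
      by (simp add: numeral_2_eq_2)
    with assms(4) show False
      by blast
  qed
qed (use assms d_ge_2 p_q in \<open>auto simp: rank_def lookup_edge_point\<close>)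

lemma raisable_if_top_and_edge_point_2_twice:
  assumes "\<alpha> = edge_point (d - 1)" "4 \<le> d" "edge_point 2 \<in># A - {#\<alpha>#} - {#edge_point 2#}"
  shows "raisable A \<alpha>"
proof -
  have "edge_point 2 \<in># A - {#\<alpha>#}"
    using assms(3) by (rule in_diffD)
  then obtain C where "A - {#\<alpha>#} = C + {#edge_point 2, edge_point 2#}"
    using mset_eq_remove2_add[OF _ assms(3)] by blast
  then have A: "A = (C + {#\<alpha>#}) + {#edge_point 2, edge_point 2#}"
    using factor by (metis add.commute add_mset_add_single insert_DiffM union_assoc)
  have "quad_move \<Gamma> A ((C + {#\<alpha>#}) + {#edge_point 4, edge_point 0#})"
    unfolding A using assms(2) by (intro quad_moveI edge_point_in_Gamma edge_point_add) simp_all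
  moreover have "(C + {#\<alpha>#}) + {#edge_point 4, edge_point 0#}
      = (C + {#edge_point 0#}) + {#edge_point (d - 1), edge_point 4#}"
    using assms(1) by simp
  ultimately have "quad_move \<Gamma> A ((C + {#edge_point 0#}) + {#edge_point (d - 1), edge_point 4#})"
    by (simp only:)
  moreover have "raisable ((C + {#edge_point 0#}) + {#edge_point (d - 1), edge_point 4#}) (edge_point (d - 1))"
    using assms(2) by (intro raisable_by_edge_move[OF refl, of _ _ d 3]) simp_all
  ultimately show ?thesis
    using assms(1) by (metis raisable_if_rtranclp r_into_rtranclp)
qed

lemma raisable_if_top_and_no_other_lookup_p_pos:
  assumes "\<alpha> = edge_point (d - 1)" "edge_point 2 \<in># A - {#\<alpha>#}"
    and others: "\<forall>c\<in>#A - {#\<alpha>#} - {#edge_point 2#}. Poly_Mapping.lookup c p = 0"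
    and "\<not> exceptional (sum_mset A)"
  shows "raisable A \<alpha>"
proof -
  let ?C = "A - {#\<alpha>#} - {#edge_point 2#}"
  have sum: "Poly_Mapping.lookup (sum_mset A) l
      = Poly_Mapping.lookup \<alpha> l + Poly_Mapping.lookup (edge_point 2) l + Poly_Mapping.lookup (sum_mset ?C) l" for l
    using lookup_sum_mset_remove[OF factor] lookup_sum_mset_remove[OF assms(2)] by simp
  have "Poly_Mapping.lookup (sum_mset ?C) p = 0"
    using others by (simp add: lookup_sum_mset)
  then have "Poly_Mapping.lookup (sum_mset A) p = d + 1"
    using sum[of p] assms(1) d_ge_2 by (simp add: lookup_edge_point)
  then obtain h where h: "h < p" "0 < Poly_Mapping.lookup (sum_mset A) h"
    using assms(4) by (auto simp: exceptional_def on_edge_def)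
  have h_neq: "h \<noteq> p" "h \<noteq> q"
    using h(1) by auto
  with h have "0 < (\<Sum>c\<in>#?C. Poly_Mapping.lookup c h)"
    using sum[of h] assms(1) by (simp add: lookup_edge_point lookup_sum_mset)
  then obtain c where c: "c \<in># ?C" "0 < Poly_Mapping.lookup c h"
    using sum_mset_pos_imp_ex by blast
  have "Poly_Mapping.lookup \<alpha> q = 1" "rank h < rank q"
    using assms(1) h(1) d_ge_2 by (auto simp: lookup_edge_point rank_def)
  moreover have "c \<in># A - {#\<alpha>#}"
    using c(1) by (rule in_diffD)
  then show ?thesis
  proof (rule raisable_by_shift_with[of c h q 1])
    show "shift \<alpha> h q 1 \<noteq> avec n d"
      using h_neq by (intro neq_avecI[of _ h]) (simp add: lookup_shift lookup_avec)
    show "shift c q h 1 \<noteq> avec n d"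
      using h_neq others c(1) p_q by (intro neq_avecI[of _ p]) (simp add: lookup_shift lookup_avec)
  qed (use calculation c(2) h(1) p_q in simp_all)
qed

lemma raisable_if_top_and_partner_edge_point_2:
  assumes "\<alpha> = edge_point (d - 1)" "edge_point 2 \<in># A - {#\<alpha>#}" "\<not> exceptional (sum_mset A)"
  shows "raisable A \<alpha>"
proof -
  have "d - 1 \<noteq> 1"
    using factor_in_Gamma assms(1) by (auto simp: avec_eq_edge_point)
  with d_ge_2 d_neq_3 have "4 \<le> d"
    by linarith
  consider (other) \<beta> where "\<beta> \<in># A - {#\<alpha>#}" "0 < Poly_Mapping.lookup \<beta> p" "\<beta> \<noteq> edge_point 2"
    | (twice) "edge_point 2 \<in># A - {#\<alpha>#} - {#edge_point 2#}"
    | (once) "\<forall>c\<in>#A - {#\<alpha>#} - {#edge_point 2#}. Poly_Mapping.lookup c p = 0"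
    by (metis in_diffD neq0_conv)
  then show ?thesis
  proof cases
    case other
    with assms(1) show ?thesis
      by (rule raisable_if_top_and_partner_lookup_p_pos)
  next
    case twice
    with assms(1) \<open>4 \<le> d\<close> show ?thesis
      by (rule raisable_if_top_and_edge_point_2_twice)
  next
    case once
    with assms show ?thesis
      by (intro raisable_if_top_and_no_other_lookup_p_pos)
  qed
qed

lemma raisable_if_partner_edge_point_2:
  assumes "edge_point 2 \<in># A - {#\<alpha>#}" "0 < Poly_Mapping.lookup \<alpha> q" "\<not> exceptional (sum_mset A)"
  shows "raisable A \<alpha>"
proof (cases "on_edge \<alpha>")
  case False
  then obtain h where h: "h < p" "0 < Poly_Mapping.lookup \<alpha> h"
    by (auto simp: on_edge_def)
  have "0 < Poly_Mapping.lookup \<alpha> p"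
    using lookup_p_pos_if_partner[OF assms(1)] by (simp add: lookup_edge_point)
  with h show ?thesis
    by (intro raisable_by_shift_with[OF assms(1), of p h 1] neq_avecI[of _ p] neq_avecI[of _ h])
      (auto simp: rank_def lookup_shift lookup_avec lookup_edge_point)
next
  case True
  define x where "x = Poly_Mapping.lookup \<alpha> p"
  have \<alpha>: "\<alpha> = edge_point x"
    using edge_point_lookup_p[OF _ True] factor_in_Gamma by (simp add: x_def)
  have "x \<noteq> 1"
    using lookup_p_neq_1_if_on_edge[OF factor_in_Gamma True] by (simp add: x_def)
  have "x < d"
    using assms(2) \<alpha> p_q by (simp add: lookup_edge_point)
  show ?thesis
  proof (cases "x + 2 \<le> d")
    case True
    with \<alpha> assms(1) show ?thesis
      by (intro raisable_by_edge_move_with[of x 2 "x + 2" 0]) simp_all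
  next
    case False
    with \<open>x < d\<close> have "x = d - 1"
      by linarith
    with \<alpha> have "\<alpha> = edge_point (d - 1)"
      by simp
    with assms show ?thesis
      by (intro raisable_if_top_and_partner_edge_point_2) simp_all
  qed
qed

text \<open>The move \<open>\<alpha>, \<beta> \<mapsto> \<alpha> + e\<^sub>i - e\<^sub>j, \<beta> - e\<^sub>i + e\<^sub>j\<close> is blocked because it would produce \<open>a\<close>;
  then \<open>\<beta>\<close> is one of two specific vectors, and a different move works.\<close>

lemma raisable_if_partner_shift_eq_avec:
  assumes "\<beta> \<in># A - {#\<alpha>#}" "i < n" "i \<noteq> j" "i \<noteq> q" "j \<noteq> p" "0 < Poly_Mapping.lookup \<alpha> j"
    "0 < Poly_Mapping.lookup \<beta> i" "shift \<beta> j i 1 = avec n d" "\<not> exceptional (sum_mset A)"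
  shows "raisable A \<alpha>"
proof -
  have "Poly_Mapping.lookup (shift \<beta> j i 1) j = Poly_Mapping.lookup \<beta> j + 1"
    using assms(3) by (simp add: lookup_shift)
  with assms(5,8) have "j = q"
    by (simp add: lookup_avec split: if_splits)
  have "shift (shift \<beta> j i 1) i j 1 = \<beta>"
    using assms(7) by (intro shift_shift_inverse) simp
  with assms(8) \<open>j = q\<close> have \<beta>_eq: "\<beta> = shift (avec n d) i q 1"
    by simp
  show ?thesis
  proof (cases "i = p")
    case True
    have "\<beta> = edge_point (1 + 1)"
      unfolding \<beta>_eq True avec_eq_edge_point using d_ge_2 by (intro shift_edge_point) simp
    then have "\<beta> = edge_point 2"
      by (simp add: numeral_2_eq_2)
    with assms(1,6,9) \<open>j = q\<close> show ?thesis
      by (intro raisable_if_partner_edge_point_2) simp_all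
  next
    case False
    with assms(2,4) have "i < p"
      by linarith
    with \<beta>_eq assms(1,6,7) \<open>j = q\<close> show ?thesis
      by (intro raisable_if_partner_lookup_p_eq_1[of \<beta> i]) (simp_all add: lookup_shift lookup_avec)
  qed
qed

lemma raisable_if_not_greedy:
  assumes "\<not> exceptional (sum_mset A)" "\<not> greedy (sum_mset A) \<alpha>"
  shows "raisable A \<alpha>"
proof -
  obtain i j where ij: "i < n" "j < n" "rank i < rank j" "0 < Poly_Mapping.lookup \<alpha> j"
    "Poly_Mapping.lookup \<alpha> i \<noteq> Poly_Mapping.lookup (sum_mset A) i"
    using assms(2) unfolding greedy_def by blast
  then have "Poly_Mapping.lookup \<alpha> i < Poly_Mapping.lookup (sum_mset A) i"
    using lookup_le_lookup_sum_mset[OF factor, of i] by linarith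
  then obtain \<beta> where \<beta>: "\<beta> \<in># A - {#\<alpha>#}" "0 < Poly_Mapping.lookup \<beta> i"
    using exists_lookup_pos_if_lookup_less_sum_mset[OF factor] by blast
  have "i \<noteq> j" "j \<noteq> p" "i \<noteq> q"
    using ij(2,3) by (auto simp: rank_def split: if_splits)
  have \<gamma>: "shift \<alpha> i j 1 \<noteq> avec n d"
  proof (cases "i = p")
    case True
    then have "0 < Poly_Mapping.lookup \<alpha> p"
      using lookup_p_pos_if_partner \<beta> by simp
    with True \<open>i \<noteq> j\<close> show ?thesis
      by (intro neq_avecI[of _ p]) (simp add: lookup_shift lookup_avec)
  next
    case False
    with \<open>i \<noteq> j\<close> \<open>i \<noteq> q\<close> show ?thesis
      by (intro neq_avecI[of _ i]) (simp add: lookup_shift lookup_avec)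
  qed
  show ?thesis
  proof (cases "shift \<beta> j i 1 = avec n d")
    case True
    show ?thesis
      by (rule raisable_if_partner_shift_eq_avec[OF \<beta>(1) ij(1) \<open>i \<noteq> j\<close> \<open>i \<noteq> q\<close> \<open>j \<noteq> p\<close> ij(4) \<beta>(2)
            True assms(1)])
  next
    case False
    with ij \<beta> \<gamma> show ?thesis
      by (intro raisable_by_shift_with[OF \<beta>(1), of i j 1]) simp_all
  qed
qed

lemma raisable_if_not_normal: "\<not> normal_factor (sum_mset A) \<alpha> \<Longrightarrow> raisable A \<alpha>"
  by (cases "exceptional (sum_mset A)")
    (simp_all add: normal_factor_def raisable_if_exceptional raisable_if_not_greedy)

end

context simplex_minus_point
begin

lemma exists_normal_factor:
  assumes "set_mset A \<subseteq> \<Gamma>" "A \<noteq> {#}"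
  shows "\<exists>\<alpha> A'. (quad_move \<Gamma>)\<^sup>*\<^sup>* A ({#\<alpha>#} + A') \<and> normal_factor (sum_mset A) \<alpha>"
  using assms
proof (induction "(n * d + 1) * d - Max (potential ` set_mset A)" arbitrary: A rule: less_induct)
  case less
  have "Max (potential ` set_mset A) \<in> potential ` set_mset A"
    using less.prems(2) by (intro Max_in) simp_all
  then obtain \<alpha> where \<alpha>: "\<alpha> \<in># A" "potential \<alpha> = Max (potential ` set_mset A)"
    by auto
  show ?case
  proof (cases "normal_factor (sum_mset A) \<alpha>")
    case True
    from \<alpha>(1) have "A = {#\<alpha>#} + (A - {#\<alpha>#})"
      by simp
    with True show ?thesis
      by (metis rtranclp.rtrancl_refl)
  next
    case False
    have "max_factor n d A \<alpha>"
      using less.prems(1) \<alpha> simplex_minus_point_axioms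
      by (simp add: max_factor_def max_factor_axioms_def)
    from max_factor.raisable_if_not_normal[OF this False]
    obtain A' \<gamma> where A': "(quad_move \<Gamma>)\<^sup>*\<^sup>* A A'" "\<gamma> \<in># A'" "potential \<alpha> < potential \<gamma>"
      unfolding raisable_def by blast
    have A'_in: "set_mset A' \<subseteq> \<Gamma>" and "A' \<noteq> {#}"
      using rtranclp_quad_move_set_mset[OF A'(1) less.prems(1)] A'(2) by auto
    have "potential \<gamma> \<le> Max (potential ` set_mset A')"
      using A'(2) by simp
    moreover have "Max (potential ` set_mset A') \<le> (n * d + 1) * d"
      using A'_in \<open>A' \<noteq> {#}\<close> potential_le by (subst Max_le_iff) fastforce+
    ultimately have "(n * d + 1) * d - Max (potential ` set_mset A')
        < (n * d + 1) * d - Max (potential ` set_mset A)"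
      using A'(3) \<alpha>(2) by linarith
    from less.hyps[OF this A'_in \<open>A' \<noteq> {#}\<close>] rtranclp_quad_move_sum_mset[OF A'(1)] A'(1)
    show ?thesis
      by (metis rtranclp_trans)
  qed
qed

text \<open>If \<open>\<alpha>\<close> and \<open>\<alpha>'\<close> agree before coordinate \<open>c\<close> in rank order and \<open>\<alpha>\<^sub>c < \<alpha>'\<^sub>c \<le> s\<^sub>c\<close>, then
  greediness of \<open>\<alpha>\<close> forces \<open>\<alpha>\<close> to vanish after \<open>c\<close>, so \<open>\<alpha>\<close> would have smaller total degree.\<close>

lemma greedy_first_difference:
  assumes "\<alpha> \<in> Vnd n d" "\<alpha>' \<in> Vnd n d" "Poly_Mapping.lookup \<alpha>' c \<le> Poly_Mapping.lookup s c"
    "greedy s \<alpha>" "c < n" "Poly_Mapping.lookup \<alpha> c < Poly_Mapping.lookup \<alpha>' c"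
    "\<forall>l<n. rank l < rank c \<longrightarrow> Poly_Mapping.lookup \<alpha> l = Poly_Mapping.lookup \<alpha>' l"
  shows False
proof -
  have "Poly_Mapping.lookup \<alpha> c \<noteq> Poly_Mapping.lookup s c"
    using assms(3,6) by linarith
  then have after: "Poly_Mapping.lookup \<alpha> l = 0" if "l < n" "rank c < rank l" for l
    using assms(4,5) that by (auto simp: greedy_def)
  have "Poly_Mapping.lookup \<alpha> l \<le> Poly_Mapping.lookup \<alpha>' l" if "l < n" for l
  proof (cases "rank l < rank c")
    case True
    with assms(7) that show ?thesis
      by simp
  next
    case False
    then consider "rank l = rank c" | "rank c < rank l"
      by linarith
    then show ?thesis
    proof cases
      case 1
      then have "l = c"
        by (rule rank_inj)
      with assms(6) show ?thesis
        by simp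
    qed (simp add: after[OF that])
  qed
  then have "total \<alpha> < total \<alpha>'"
    unfolding total_def using assms(5,6) by (intro sum_strict_mono_ex1) auto
  with assms(1,2) show False
    by (simp add: in_Vnd_iff)
qed

lemma greedy_unique:
  assumes "\<alpha> \<in> Vnd n d" "\<alpha>' \<in> Vnd n d"
    "\<forall>l. Poly_Mapping.lookup \<alpha> l \<le> Poly_Mapping.lookup s l" "\<forall>l. Poly_Mapping.lookup \<alpha>' l \<le> Poly_Mapping.lookup s l"
    "greedy s \<alpha>" "greedy s \<alpha>'"
  shows "\<alpha> = \<alpha>'"
proof (rule ccontr)
  let ?D = "\<lambda>l. l < n \<and> Poly_Mapping.lookup \<alpha> l \<noteq> Poly_Mapping.lookup \<alpha>' l"
  assume "\<alpha> \<noteq> \<alpha>'"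
  then obtain l where l: "Poly_Mapping.lookup \<alpha> l \<noteq> Poly_Mapping.lookup \<alpha>' l"
    by (meson poly_mapping_eqI)
  have "l < n"
  proof (rule ccontr)
    assume "\<not> l < n"
    with assms(1,2) l show False
      by (simp add: in_Vnd_iff)
  qed
  with l have "?D l"
    by simp
  from ex_has_least_nat[of ?D l rank, OF this]
  obtain c where c: "c < n" "Poly_Mapping.lookup \<alpha> c \<noteq> Poly_Mapping.lookup \<alpha>' c"
    and least: "\<forall>l. ?D l \<longrightarrow> rank c \<le> rank l"
    by (elim exE conjE)
  have before: "\<forall>l<n. rank l < rank c \<longrightarrow> Poly_Mapping.lookup \<alpha> l = Poly_Mapping.lookup \<alpha>' l"
    using least by (meson not_le)
  show False
  proof (cases "Poly_Mapping.lookup \<alpha> c < Poly_Mapping.lookup \<alpha>' c")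
    case True
    with c(1) assms(1,2,4,5) before show False
      by (intro greedy_first_difference[of \<alpha> \<alpha>' c s]) simp_all
  next
    case False
    with c have "Poly_Mapping.lookup \<alpha>' c < Poly_Mapping.lookup \<alpha> c"
      by linarith
    with c(1) assms(1,2,3,6) before show False
      by (intro greedy_first_difference[of \<alpha>' \<alpha> c s]) simp_all
  qed
qed

lemma normal_factor_unique:
  assumes "\<alpha> \<in> Vnd n d" "\<alpha>' \<in> Vnd n d"
    "\<forall>l. Poly_Mapping.lookup \<alpha> l \<le> Poly_Mapping.lookup s l" "\<forall>l. Poly_Mapping.lookup \<alpha>' l \<le> Poly_Mapping.lookup s l"
    "normal_factor s \<alpha>" "normal_factor s \<alpha>'"
  shows "\<alpha> = \<alpha>'"
  using assms greedy_unique by (auto simp: normal_factor_def split: if_splits)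

lemma total_sum_mset: "set_mset A \<subseteq> Vnd n d \<Longrightarrow> total (sum_mset A) = d * size A"
  by (induction A) (simp_all add: total_add in_Vnd_iff total_def[of 0])

lemma size_eq_if_sum_mset_eq:
  assumes "set_mset A \<subseteq> Vnd n d" "set_mset B \<subseteq> Vnd n d" "sum_mset A = sum_mset B"
  shows "size A = size B"
proof -
  have "d * size A = d * size B"
    using total_sum_mset[OF assms(1)] total_sum_mset[OF assms(2)] assms(3) by metis
  with d_ge_2 show ?thesis
    by simp
qed

theorem quad_move_connected:
  assumes "set_mset A \<subseteq> \<Gamma>" "set_mset B \<subseteq> \<Gamma>" "sum_mset A = sum_mset B"
  shows "(quad_move \<Gamma>)\<^sup>*\<^sup>* A B"
  using assms
proof (induction "size A" arbitrary: A B rule: less_induct)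
  case less
  have size_eq: "size A' = size A" if "set_mset A' \<subseteq> \<Gamma>" "sum_mset A' = sum_mset A" for A'
    using that less.prems(1) by (intro size_eq_if_sum_mset_eq) auto
  show ?case
  proof (cases "A = {#}")
    case True
    with size_eq[OF less.prems(2)] less.prems(3) show ?thesis
      by simp
  next
    case False
    with size_eq[OF less.prems(2)] less.prems(3) have "B \<noteq> {#}"
      by auto
    obtain \<alpha> A' where A': "(quad_move \<Gamma>)\<^sup>*\<^sup>* A ({#\<alpha>#} + A')" "normal_factor (sum_mset A) \<alpha>"
      using exists_normal_factor[OF less.prems(1) False] by blast
    obtain \<beta> B' where B': "(quad_move \<Gamma>)\<^sup>*\<^sup>* B ({#\<beta>#} + B')" "normal_factor (sum_mset A) \<beta>"
      using exists_normal_factor[OF less.prems(2) \<open>B \<noteq> {#}\<close>] less.prems(3) by auto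
    have sums: "\<alpha> + sum_mset A' = sum_mset A" "\<beta> + sum_mset B' = sum_mset A"
      using rtranclp_quad_move_sum_mset[OF A'(1)] rtranclp_quad_move_sum_mset[OF B'(1)] less.prems(3)
      by simp_all
    have in_Gamma: "\<alpha> \<in> \<Gamma>" "set_mset A' \<subseteq> \<Gamma>" "\<beta> \<in> \<Gamma>" "set_mset B' \<subseteq> \<Gamma>"
      using rtranclp_quad_move_set_mset[OF A'(1) less.prems(1)]
        rtranclp_quad_move_set_mset[OF B'(1) less.prems(2)] by auto
    have "\<forall>l. Poly_Mapping.lookup \<alpha> l \<le> Poly_Mapping.lookup (sum_mset A) l"
      unfolding sums(1)[symmetric] by (simp add: lookup_add)
    moreover have "\<forall>l. Poly_Mapping.lookup \<beta> l \<le> Poly_Mapping.lookup (sum_mset A) l"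
      unfolding sums(2)[symmetric] by (simp add: lookup_add)
    ultimately have "\<alpha> = \<beta>"
      using in_Gamma A'(2) B'(2) by (intro normal_factor_unique) auto
    have "size A' < size A"
      using size_eq[of "{#\<alpha>#} + A'"] in_Gamma sums(1) by simp
    moreover have "sum_mset A' = sum_mset B'"
      using sums \<open>\<alpha> = \<beta>\<close> by (metis add_left_cancel)
    ultimately have "(quad_move \<Gamma>)\<^sup>*\<^sup>* A' B'"
      using in_Gamma by (intro less.hyps) auto
    then have "(quad_move \<Gamma>)\<^sup>*\<^sup>* ({#\<alpha>#} + A') ({#\<alpha>#} + B')"
      by (rule rtranclp_quad_move_add_mset)
    with A'(1) rtranclp_quad_move_sym[OF B'(1)] \<open>\<alpha> = \<beta>\<close> show ?thesis
      by (meson rtranclp_trans)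
  qed
qed

end

theorem theorem2p3:
  fixes n d :: nat
  assumes "n \<ge> 2" and "d \<ge> 2" and "d \<noteq> 3"
  defines "\<Gamma> \<equiv> Vnd n d - {avec n d}"
  shows "\<exists>G :: 'k::field spoly set. (\<forall>g\<in>G. homogeneous_deg 2 g) \<and>
           G \<subseteq> toric_ideal \<Gamma> \<and> toric_ideal \<Gamma> = ideal_in (Sring \<Gamma>) G"
proof -
  interpret simplex_minus_point n d
    using assms(1-3) by unfold_locales
  have "\<And>A B. set_mset A \<subseteq> \<Gamma> \<Longrightarrow> set_mset B \<subseteq> \<Gamma> \<Longrightarrow> sum_mset A = sum_mset B \<Longrightarrow>
      (quad_move \<Gamma>)\<^sup>*\<^sup>* A B"
    unfolding \<Gamma>_def by (rule quad_move_connected)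
  then have "toric_ideal \<Gamma> = ideal_in (Sring \<Gamma>) (quad_binomials \<Gamma> :: 'k spoly set)"
    by (rule toric_ideal_quadratic_if_fibres_connected)
  then show ?thesis
    by (intro exI[of _ "quad_binomials \<Gamma>"] conjI ballI quad_binomials_homogeneous
        quad_binomials_subset_toric_ideal)
qed

end
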